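(* Let $n\in\mathbb{N}$, let $\lambda$ be a partition with at most $2n$ parts and $\mu\subseteq\lambda$ a partition with at most $n$ parts, and let $Q\in Rec_{2n}(\lambda/\mu)$, with associated chain of partitions $$\lambda=\mu^{(0)}\supseteq\mu^{(1)}\supseteq\cdots\supseteq\mu^{(N)}=\mu ,$$ where each $\mu^{(i-1)}/\mu^{(i)}$ is a vertical strip with $Q[i]$ cells. For $1\le i\le N$ let $t_0^{(i)}$ be the slack and $\mathbf{r}^{(i)}$ the slack vector of the strip $\mu^{(i-1)}/\mu^{(i)}$, and put $t_0^{(0)}:=0$, $\mathbf{r}^{(0)}:=()$. Then for each $1\le i\le N$: (a) $\ell(\mu^{(i-1)})=Q[i]+t_0^{(i)}\ge \ell(\mu^{(i)})$; (b) $0\le t_0^{(i-1)}\le t_0^{(i)}\le \ell(\mu^{(i)})\le \ell(\mu^{(i-1)})$; in particular the slack sequence $(t_0^{(N)},\dots,t_0^{(1)})$ is weakly decreasing and $(\ell(\mu^{(N)}),\dots,\ell(\mu^{(1)}),\ell(\mu^{(0)}))$ is weakly increasing; (c) $2n\ge Q[i]+2t_0^{(i)}=\ell(\mu^{(i-1)})+t_0^{(i)}$, equivalently $2n-t_0^{(i)}\ge Q[i]+t_0^{(i)}=\ell(\mu^{(i-1)})$; (d) $\mathbf{r}^{(i)}\le_{\mathbf{r}}\mathbf{r}^{(i-1)}$, so that the slack vector sequence satisfies $\mathbf{r}^{(N)}\le_{\mathbf{r}}\cdots\le_{\mathbf{r}}\mathbf{r}^{(1)}$; (e) $\mathbf{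r}^{(i)}\subseteq[1,\ell(\mu^{(i)})]\subseteq[1,\ell(\mu^{(i-1)})]\subseteq[1,2n-t_0^{(i)}]$.
   Context: Partitions $\gamma=(\gamma_1\ge\gamma_2\ge\cdots)$ are identified with Young diagrams (cells $(i,j)$, $1\le i\le\ell(\gamma)$, $1\le j\le\gamma_i$, matrix coordinates); $\ell(\gamma)$ is the number of nonzero parts. For $\alpha\subseteq\gamma$, $\gamma/\alpha$ is a vertical strip if it has at most one cell in each row. A partition $\nu$ is even if $\nu_{2i-1}=\nu_{2i}$ for all $i\ge1$. A semistandard tableau $T$ of skew shape $\lambda/\mu$ with entries in $[1,2n]$ is a filling of the cells of $\lambda/\mu$ weakly increasing along rows and strictly increasing down columns; set $T(a,b)=0$ for cells of $\mu$ and $T(a,b)=\infty$ for $(a,b)\notin\lambda$. Its weight is $(T[1],\dots,T[2n])$, $T[k]$ = number of entries equal to $k$. Its reverse column word is obtained by reading the columns from right to left, each column from top to bottom. A word is Yamanouchi if the weight of each of its prefixes is a partition. $T$ is a Littlewood–Richardson–Sundaram tableau if (1) its reverse column word is Yamanouchi, (2) its weight $\nu=(T[1],\dots,T[2n])$ is an even partition, and (3) $T(n+i,1)\ge 2i$ for every $i\ge0$. For such $T$ with weight $\nu$, let $N=\nu_1$. For $1\le k\le N$ let $J_k$ be the set of cells of $T$ containing the $k$-th occurrence (in the reverse column word) of some letter $j$ with $\nu_j\ge k$. Define $Q=\lozenge(T)$ as the filling of $\lambda/\mu$ with $Q(c)=k$ for $c\in J_k$. The set $Rec_{2n}(\lambda/\mu)$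 is the set of all such $Q$ as $T$ ranges over Littlewood–Richardson–Sundaram tableaux of shape $\lambda/\mu$. For $Q\in Rec_{2n}(\lambda/\mu)$, $Q[k]$ denotes the number of entries equal to $k$, $N$ its largest entry, and $\mu^{(k)}$ (for $0\le k\le N$) the partition whose diagram is $D(\mu)\cup\{c\in\lambda/\mu: Q(c)\ge k+1\}$; so $\mu^{(0)}=\lambda$, $\mu^{(N)}=\mu$, and $\mu^{(k-1)}/\mu^{(k)}$ is a vertical strip with $Q[k]$ cells, where $Q[k]\ge2$ is even and $(Q[1],\dots,Q[N])$ is the conjugate of an even partition. Slack data: for $1\le i\le N$, let $l_0^{(i)}$ be the number of cells of the strip $\mu^{(i-1)}/\mu^{(i)}$ lying in rows $1,\dots,\ell(\mu^{(i)})$; the slack is $t_0^{(i)}=\ell(\mu^{(i)})-l_0^{(i)}$, and the slack vector $\mathbf{r}^{(i)}=(r_1<\dots<r_{t_0^{(i)}})$ is the increasingly ordered set of row indices in $[1,\ell(\mu^{(i)})]$ containing no cell of $\mu^{(i-1)}/\mu^{(i)}$ (written $()$ when $t_0^{(i)}=0$). For $x\in\mathbb{Z}_{\ge0}^p$, $y\in\mathbb{Z}_{\ge0}^q$, write $x\le_{\mathbf{r}}y$ to mean $p\ge q\ge0$ and $x_j\le y_j$ whenever $y_j>0$ (in particular $x\le_{\mathbf{r}}()$ always). $[a,b]=\{a,a+1,\dots,b\}$. *)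

theory Defs
  imports Main "HOL-Library.Extended_Nat"
begin

text \<open>A partition is a weakly decreasing list of positive naturals (its nonzero parts);
  the length of the list is the number of parts. Cells are pairs (row, column), 1-based.\<close>

definition is_partition :: "nat list \<Rightarrow> bool" where
  "is_partition g \<longleftrightarrow> sorted_wrt (\<ge>) g \<and> 0 \<notin> set g"

definition ppart :: "nat list \<Rightarrow> nat \<Rightarrow> nat" where
  "ppart g i = (if 1 \<le> i \<and> i \<le> length g then g ! (i - 1) else 0)"

definition diagram :: "nat list \<Rightarrow> (nat \<times> nat) set" where
  "diagram g = {(i, j). 1 \<le> i \<and> i \<le> length g \<and> 1 \<le> j \<and> j \<le> ppart g i}"

definition skew :: "nat list \<Rightarrow> nat list \<Rightarrow> (nat \<times> nat) set" where
  "skew lam mu = diagram lam - diagram mu"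

definition ext_val :: "nat list \<Rightarrow> nat list \<Rightarrow> (nat \<times> nat \<Rightarrow> nat) \<Rightarrow> nat \<times> nat \<Rightarrow> enat" where
  "ext_val lam mu T c =
     (if c \<in> diagram mu then 0 else if c \<in> diagram lam then enat (T c) else \<infinity>)"

definition semistandard :: "nat \<Rightarrow> nat list \<Rightarrow> nat list \<Rightarrow> (nat \<times> nat \<Rightarrow> nat) \<Rightarrow> bool" where
  "semistandard m lam mu T \<longleftrightarrow>
     (\<forall>c \<in> skew lam mu. 1 \<le> T c \<and> T c \<le> m) \<and>
     (\<forall>a b. (a, b) \<in> skew lam mu \<and> (a, b + 1) \<in> skew lam mu \<longrightarrow> T (a, b) \<le> T (a, b + 1)) \<and>
     (\<forall>a b. (a, b) \<in> skew lam mu \<and> (a + 1, b) \<in> skew lam mu \<longrightarrow> T (a, b) < T (a + 1, b))"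

definition weight :: "nat list \<Rightarrow> nat list \<Rightarrow> (nat \<times> nat \<Rightarrow> nat) \<Rightarrow> nat \<Rightarrow> nat" where
  "weight lam mu T k = card {c \<in> skew lam mu. T c = k}"

text \<open>Cells in reverse column reading order: columns right to left, each top to bottom.\<close>
definition rcw_cells :: "nat list \<Rightarrow> nat list \<Rightarrow> (nat \<times> nat) list" where
  "rcw_cells lam mu =
     concat (map (\<lambda>j. filter (\<lambda>c. c \<in> skew lam mu) (map (\<lambda>a. (a, j)) [1..<length lam + 1]))
                 (rev [1..<ppart lam 1 + 1]))"

definition rcw :: "nat list \<Rightarrow> nat list \<Rightarrow> (nat \<times> nat \<Rightarrow> nat) \<Rightarrow> nat list" where
  "rcw lam mu T = map T (rcw_cells lam mu)"

definition yamanouchi :: "nat \<Rightarrow> nat list \<Rightarrow> bool" where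
  "yamanouchi m w \<longleftrightarrow>
     (\<forall>p \<le> length w. \<forall>k. 1 \<le> k \<and> k < m \<longrightarrow>
        count_list (take p w) (k + 1) \<le> count_list (take p w) k)"

definition LRS :: "nat \<Rightarrow> nat list \<Rightarrow> nat list \<Rightarrow> (nat \<times> nat \<Rightarrow> nat) \<Rightarrow> bool" where
  "LRS n lam mu T \<longleftrightarrow>
     semistandard (2 * n) lam mu T \<and>
     yamanouchi (2 * n) (rcw lam mu T) \<and>
     (\<forall>k. 1 \<le> k \<and> k < 2 * n \<longrightarrow> weight lam mu T (k + 1) \<le> weight lam mu T k) \<and>
     (\<forall>i \<ge> 1. weight lam mu T (2 * i - 1) = weight lam mu T (2 * i)) \<and>
     (\<forall>i. ext_val lam mu T (n + i, 1) \<ge> enat (2 * i))"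

text \<open>J k: cells holding the k-th occurrence (in the reverse column word) of a letter j
  with weight j \<ge> k.\<close>
definition J_set :: "nat list \<Rightarrow> nat list \<Rightarrow> (nat \<times> nat \<Rightarrow> nat) \<Rightarrow> nat \<Rightarrow> (nat \<times> nat) set" where
  "J_set lam mu T k =
     {rcw_cells lam mu ! p | p. p < length (rcw_cells lam mu) \<and>
        weight lam mu T (rcw lam mu T ! p) \<ge> k \<and>
        count_list (take (Suc p) (rcw lam mu T)) (rcw lam mu T ! p) = k}"

definition lozenge :: "nat list \<Rightarrow> nat list \<Rightarrow> (nat \<times> nat \<Rightarrow> nat) \<Rightarrow> (nat \<times> nat \<Rightarrow> nat)" where
  "lozenge lam mu T =
     (\<lambda>c. if c \<in> skew lam mu
          then (THE k. 1 \<le> k \<and> k \<le> weight lam mu T 1 \<and> c \<in> J_set lam mu T k)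
          else 0)"

definition Rec :: "nat \<Rightarrow> nat list \<Rightarrow> nat list \<Rightarrow> (nat \<times> nat \<Rightarrow> nat) set" where
  "Rec n lam mu = {lozenge lam mu T | T. LRS n lam mu T}"

definition Qcount :: "nat list \<Rightarrow> nat list \<Rightarrow> (nat \<times> nat \<Rightarrow> nat) \<Rightarrow> nat \<Rightarrow> nat" where
  "Qcount lam mu Q k = card {c \<in> skew lam mu. Q c = k}"

definition Nmax :: "nat list \<Rightarrow> nat list \<Rightarrow> (nat \<times> nat \<Rightarrow> nat) \<Rightarrow> nat" where
  "Nmax lam mu Q = Max (insert 0 (Q ` skew lam mu))"

definition mu_chain :: "nat list \<Rightarrow> nat list \<Rightarrow> (nat \<times> nat \<Rightarrow> nat) \<Rightarrow> nat \<Rightarrow> nat list" where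
  "mu_chain lam mu Q k =
     (THE g. is_partition g \<and> diagram g = diagram mu \<union> {c \<in> skew lam mu. Q c \<ge> k + 1})"

definition chain_strip :: "nat list \<Rightarrow> nat list \<Rightarrow> (nat \<times> nat \<Rightarrow> nat) \<Rightarrow> nat \<Rightarrow> (nat \<times> nat) set" where
  "chain_strip lam mu Q i = diagram (mu_chain lam mu Q (i - 1)) - diagram (mu_chain lam mu Q i)"

definition slack_l0 :: "nat list \<Rightarrow> nat list \<Rightarrow> (nat \<times> nat \<Rightarrow> nat) \<Rightarrow> nat \<Rightarrow> nat" where
  "slack_l0 lam mu Q i =
     card {c \<in> chain_strip lam mu Q i. 1 \<le> fst c \<and> fst c \<le> length (mu_chain lam mu Q i)}"

definition slack_t0 :: "nat list \<Rightarrow> nat list \<Rightarrow> (nat \<times> nat \<Rightarrow> nat) \<Rightarrow> nat \<Rightarrow> nat" where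
  "slack_t0 lam mu Q i =
     (if i = 0 then 0 else length (mu_chain lam mu Q i) - slack_l0 lam mu Q i)"

definition slack_vec :: "nat list \<Rightarrow> nat list \<Rightarrow> (nat \<times> nat \<Rightarrow> nat) \<Rightarrow> nat \<Rightarrow> nat list" where
  "slack_vec lam mu Q i =
     (if i = 0 then []
      else sorted_list_of_set
        {r. 1 \<le> r \<and> r \<le> length (mu_chain lam mu Q i) \<and> (\<forall>b. (r, b) \<notin> chain_strip lam mu Q i)})"

text \<open>x \<le>_r y (1-based components j correspond to list index j-1).\<close>
definition le_r :: "nat list \<Rightarrow> nat list \<Rightarrow> bool" where
  "le_r x y \<longleftrightarrow> length y \<le> length x \<and> (\<forall>j < length y. y ! j > 0 \<longrightarrow> x ! j \<le> y ! j)"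

end

theory Submission
  imports Defs
begin

text \<open>
  The recording tableau \<open>Q = \<lozenge>(T)\<close> labels each cell by the occurrence number of its letter
  in the reverse column word of \<open>T\<close>. The Yamanouchi property and semistandardness make
  occurrence numbers decrease strictly along rows and weakly down columns. Hence every
  \<open>\<mu>^(k)\<close> is a partition, and the strip of cells with occurrence number \<open>i\<close> meets every
  row and every letter at most once, and meets every letter \<open>j\<close> with \<open>\<nu>\<^sub>j \<ge> i\<close>.
  Counting rows gives (a), since each row of \<open>\<mu>^(i-1)\<close> below \<open>\<mu>^(i)\<close> meets the strip.
  For (b) and (d), match each strip cell with the cell of the previous strip that carries the
  same letter: that cell lies weakly higher. For (c), if the last row \<open>r\<close> of \<open>\<mu>^(i-1)\<close>
  satisfies \<open>r > n\<close>, then its first cell carries a letter of at least \<open>2(r - n)\<close>; every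
  letter up to that one meets the strip, which therefore has at least \<open>2(r - n)\<close> cells.
\<close>


section \<open>Young diagrams\<close>

lemma mem_diagram_iff: "(a, b) \<in> diagram g \<longleftrightarrow> 1 \<le> a \<and> 1 \<le> b \<and> b \<le> ppart g a"
  by (auto simp: diagram_def ppart_def)

lemma mem_diagram_imp_row_le: "(a, b) \<in> diagram g \<Longrightarrow> a \<le> length g"
  by (auto simp: mem_diagram_iff ppart_def split: if_splits)

lemma ppart_antimono:
  assumes "is_partition g" "1 \<le> a" "a \<le> a'"
  shows "ppart g a' \<le> ppart g a"
  using assms by (cases "a = a'") (auto simp: ppart_def is_partition_def sorted_wrt_iff_nth_less)

lemma ppart_pos:
  assumes "is_partition g" "1 \<le> a" "a \<le> length g"
  shows "1 \<le> ppart g a"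
proof -
  have "g ! (a - 1) \<in> set g" using assms(2,3) by simp
  then have "g ! (a - 1) \<noteq> 0" using assms(1) unfolding is_partition_def by metis
  then show ?thesis using assms(2,3) by (simp add: ppart_def)
qed

lemma first_column_mem_diagram_iff:
  "is_partition g \<Longrightarrow> (a, 1) \<in> diagram g \<longleftrightarrow> 1 \<le> a \<and> a \<le> length g"
  using ppart_pos[of g a] mem_diagram_imp_row_le[of a 1 g] by (auto simp: mem_diagram_iff)

lemma finite_diagram: "finite (diagram g)"
proof (rule finite_subset)
  show "diagram g \<subseteq> {..length g} \<times> {..sum_list g}"
  proof (rule subrelI)
    fix a b assume "(a, b) \<in> diagram g"
    then have "a \<le> length g" "b \<le> ppart g a" by (auto simp: mem_diagram_iff mem_diagram_imp_row_le)
    moreover have "ppart g a \<le> sum_list g" by (auto simp: ppart_def intro!: elem_le_sum_list)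
    ultimately show "(a, b) \<in> {..length g} \<times> {..sum_list g}" by simp
  qed
qed simp

lemma partition_eqI:
  assumes g: "is_partition g" and h: "is_partition h" and eq: "diagram g = diagram h"
  shows "g = h"
proof -
  have len: "length g = length h"
  proof -
    have "1 \<le> a \<and> a \<le> length g \<longleftrightarrow> 1 \<le> a \<and> a \<le> length h" for a
      using first_column_mem_diagram_iff[OF g, of a] first_column_mem_diagram_iff[OF h, of a] eq
      by simp
    from this[of "length g"] this[of "length h"] show ?thesis
      by (cases "length g = 0"; cases "length h = 0") auto
  qed
  have ppart_eq: "ppart g a = ppart h a" if "1 \<le> a" for a
  proof -
    have "b \<le> ppart g a \<longleftrightarrow> b \<le> ppart h a" if "1 \<le> b" for b
      using eq \<open>1 \<le> a\<close> that mem_diagram_iff[of a b g] mem_diagram_iff[of a b h] by blast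
    from this[of "ppart g a"] this[of "ppart h a"] show ?thesis
      by (cases "ppart g a = 0"; cases "ppart h a = 0") auto
  qed
  show ?thesis
  proof (rule nth_equalityI)
    fix k assume "k < length g"
    then show "g ! k = h ! k" using ppart_eq[of "Suc k"] len by (simp add: ppart_def)
  qed (rule len)
qed

lemma down_closed_nat_mem:
  fixes S :: "nat set"
  assumes closed: "\<And>b. b \<in> S \<Longrightarrow> 1 < b \<Longrightarrow> b - 1 \<in> S"
    and "b \<in> S" "1 \<le> b'" "b' \<le> b"
  shows "b' \<in> S"
  using assms(4,2)
proof (induction rule: inc_induct)
  case (step m)
  then show ?case using closed[of "Suc m"] assms(3) by simp
qed

lemma down_closed_nat_eq_atLeastAtMost:
  fixes S :: "nat set"
  assumes "finite S" "\<And>b. b \<in> S \<Longrightarrow> 1 \<le> b"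
    and "\<And>b. b \<in> S \<Longrightarrow> 1 < b \<Longrightarrow> b - 1 \<in> S"
  shows "S = {1..card S}"
proof (cases "S = {}")
  case False
  have "S = {1..Max S}"
  proof (intro set_eqI iffI)
    fix x assume "x \<in> S"
    then show "x \<in> {1..Max S}" using assms(1,2) by simp
  next
    fix x assume "x \<in> {1..Max S}"
    then show "x \<in> S" using down_closed_nat_mem[OF assms(3) Max_in[OF assms(1) False]] by simp
  qed
  then show ?thesis by (metis card_atLeastAtMost diff_Suc_1)
qed simp

lemma obtain_partition_with_diagram:
  fixes D :: "(nat \<times> nat) set"
  assumes fin: "finite D" and pos: "\<And>a b. (a, b) \<in> D \<Longrightarrow> 1 \<le> a \<and> 1 \<le> b"
    and left: "\<And>a b. (a, b) \<in> D \<Longrightarrow> 1 < b \<Longrightarrow> (a, b - 1) \<in> D"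
    and up: "\<And>a b. (a, b) \<in> D \<Longrightarrow> 1 < a \<Longrightarrow> (a - 1, b) \<in> D"
  obtains g where "is_partition g" "diagram g = D"
proof -
  define row where "row a = card {b. (a, b) \<in> D}" for a
  define len where "len = card {a. (a, 1) \<in> D}"
  have fin_row: "finite {b. (a, b) \<in> D}" for a
    using finite_imageI[OF fin, of snd] by (rule finite_subset[rotated]) force
  have fin_col: "finite {a. (a, b) \<in> D}" for b
    using finite_imageI[OF fin, of fst] by (rule finite_subset[rotated]) force
  have mem_D: "(a, b) \<in> D \<longleftrightarrow> 1 \<le> b \<and> b \<le> row a" for a b
    using down_closed_nat_eq_atLeastAtMost[OF fin_row, of a] pos left
    unfolding row_def set_eq_iff by (metis atLeastAtMost_iff mem_Collect_eq)
  have first_col: "(a, 1) \<in> D \<longleftrightarrow> 1 \<le> a \<and> a \<le> len" for a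
    using down_closed_nat_eq_atLeastAtMost[OF fin_col, of 1] pos up
    unfolding len_def set_eq_iff by (metis atLeastAtMost_iff mem_Collect_eq)
  have row_antimono: "row a' \<le> row a" if "1 \<le> a" "a \<le> a'" for a a'
  proof -
    have "(a, b) \<in> D" if "(a', b) \<in> D" for b
      using down_closed_nat_mem[of "{x. (x, b) \<in> D}", OF _ _ \<open>1 \<le> a\<close> \<open>a \<le> a'\<close>] up that
      by simp
    then show ?thesis unfolding row_def by (intro card_mono fin_row) auto
  qed
  have row_beyond: "row a = 0" if "a = 0 \<or> len < a" for a
    using mem_D[of a 1] first_col[of a] that by auto
  define g where "g = map row [1..<len + 1]"
  have ppart_g: "ppart g a = row a" for a
    using row_beyond[of a] by (cases "1 \<le> a \<and> a \<le> len") (auto simp: g_def ppart_def simp del: upt_Suc)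
  have "is_partition g"
    unfolding is_partition_def
  proof
    show "sorted_wrt (\<ge>) g"
      by (auto simp: g_def sorted_wrt_iff_nth_less simp del: upt_Suc intro: row_antimono)
    have "row a \<noteq> 0" if "1 \<le> a" "a \<le> len" for a
      using first_col[of a] mem_D[of a 1] that by simp
    then show "0 \<notin> set g" by (force simp: g_def simp del: upt_Suc)
  qed
  moreover have "diagram g = D"
    using mem_D pos by (auto simp: mem_diagram_iff ppart_g)
  ultimately show ?thesis by (rule that)
qed

section \<open>The reverse column reading order\<close>

definition read_before :: "nat \<times> nat \<Rightarrow> nat \<times> nat \<Rightarrow> bool" where
  "read_before c c' \<longleftrightarrow> snd c' < snd c \<or> (snd c = snd c' \<and> fst c < fst c')"

definition read_le :: "nat \<times> nat \<Rightarrow> nat \<times> nat \<Rightarrow> bool" where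
  "read_le c c' \<longleftrightarrow> c = c' \<or> read_before c c'"

lemma read_before_irrefl: "\<not> read_before c c"
  by (simp add: read_before_def)

lemma read_before_asym: "read_before c c' \<Longrightarrow> \<not> read_before c' c"
  by (auto simp: read_before_def)

lemma read_before_trans: "read_before c c' \<Longrightarrow> read_before c' c'' \<Longrightarrow> read_before c c''"
  by (auto simp: read_before_def)

lemma read_before_total: "c \<noteq> c' \<Longrightarrow> read_before c c' \<or> read_before c' c"
  by (cases c; cases c') (auto simp: read_before_def)

lemma read_le_trans: "read_le c c' \<Longrightarrow> read_le c' c'' \<Longrightarrow> read_le c c''"
  by (auto simp: read_le_def intro: read_before_trans)

lemma not_read_le_iff: "\<not> read_le c c' \<longleftrightarrow> read_before c' c"
  using read_before_total[of c c'] read_before_asym[of c' c] read_before_irrefl[of c]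
  by (auto simp: read_le_def)

lemma sorted_wrt_irrefl_imp_distinct: "sorted_wrt R xs \<Longrightarrow> (\<And>x. \<not> R x x) \<Longrightarrow> distinct xs"
  by (induction xs) auto

lemma set_take_Suc_sorted_wrt:
  assumes sorted: "sorted_wrt R xs" and asym: "\<And>x y. R x y \<Longrightarrow> \<not> R y x" and p: "p < length xs"
  shows "set (take (Suc p) xs) = {x \<in> set xs. x = xs ! p \<or> R x (xs ! p)}"
proof (intro set_eqI iffI)
  fix x assume "x \<in> set (take (Suc p) xs)"
  then obtain q where "q < Suc p" "x = xs ! q" using p by (auto simp: in_set_conv_nth)
  then show "x \<in> {x \<in> set xs. x = xs ! p \<or> R x (xs ! p)}"
    using sorted p by (cases "q = p") (auto simp: sorted_wrt_iff_nth_less)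
next
  fix x assume x: "x \<in> {x \<in> set xs. x = xs ! p \<or> R x (xs ! p)}"
  then obtain q where q: "q < length xs" "x = xs ! q" by (auto simp: in_set_conv_nth)
  have "q \<le> p"
  proof (rule ccontr)
    assume "\<not> q \<le> p"
    then have "R (xs ! p) x" using sorted q by (auto simp: sorted_wrt_iff_nth_less)
    then show False using x asym[of x "xs ! p"] asym[of x x] by auto
  qed
  then show "x \<in> set (take (Suc p) xs)" using q by (auto simp: in_set_conv_nth)
qed

lemma sorted_wrt_read_before_rcw_cells: "sorted_wrt read_before (rcw_cells lam mu)"
proof -
  have "sorted_wrt read_before
          (concat (map (\<lambda>j. filter P (map (\<lambda>a. (a, j)) [1..<K + 1])) (rev [1..<m + 1])))"
    for P K m
  proof (induction m)
    case (Suc m)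
    let ?col = "filter P (map (\<lambda>a. (a, Suc m)) [1..<K + 1])"
    let ?rest = "concat (map (\<lambda>j. filter P (map (\<lambda>a. (a, j)) [1..<K + 1])) (rev [1..<m + 1]))"
    have "sorted_wrt read_before ?col"
      by (intro sorted_wrt_filter)
        (auto simp: sorted_wrt_map read_before_def sorted_wrt_iff_nth_less simp del: upt_Suc)
    moreover have "\<forall>c\<in>set ?col. \<forall>c'\<in>set ?rest. read_before c c'"
      by (auto simp: read_before_def simp del: upt_Suc)
    ultimately have "sorted_wrt read_before (?col @ ?rest)"
      using Suc.IH by (simp only: sorted_wrt_append)
    then show ?case by simp
  qed simp
  then show ?thesis unfolding rcw_cells_def .
qed

lemma distinct_rcw_cells: "distinct (rcw_cells lam mu)"
  using sorted_wrt_read_before_rcw_cells read_before_irrefl by (rule sorted_wrt_irrefl_imp_distinct)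

lemma mem_skew_iff:
  "(a, b) \<in> skew lam mu \<longleftrightarrow> 1 \<le> a \<and> 1 \<le> b \<and> b \<le> ppart lam a \<and> ppart mu a < b"
  by (auto simp: skew_def mem_diagram_iff)

lemma finite_skew: "finite (skew lam mu)"
  by (simp add: skew_def finite_diagram)

lemma set_rcw_cells:
  assumes "is_partition lam"
  shows "set (rcw_cells lam mu) = skew lam mu"
proof -
  have "1 \<le> a \<and> a \<le> length lam \<and> 1 \<le> b \<and> b \<le> ppart lam 1" if "(a, b) \<in> skew lam mu" for a b
    using that ppart_antimono[OF assms, of 1 a] mem_diagram_imp_row_le[of a b lam]
    by (auto simp: skew_def mem_diagram_iff)
  moreover have "set (rcw_cells lam mu) = skew lam mu \<inter> {1..length lam} \<times> {1..ppart lam 1}"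
    unfolding rcw_cells_def by (auto simp: image_iff simp del: upt_Suc)
  ultimately show ?thesis by auto
qed

lemma count_list_take_rcw:
  assumes "is_partition lam" "p < length (rcw_cells lam mu)"
  shows "count_list (take (Suc p) (rcw lam mu T)) k
           = card {c \<in> skew lam mu. read_le c (rcw_cells lam mu ! p) \<and> T c = k}"
proof -
  let ?cells = "take (Suc p) (rcw_cells lam mu)"
  have "set ?cells = {c \<in> skew lam mu. read_le c (rcw_cells lam mu ! p)}"
    using set_take_Suc_sorted_wrt[OF sorted_wrt_read_before_rcw_cells read_before_asym assms(2)]
      set_rcw_cells[OF assms(1)] by (auto simp: read_le_def)
  moreover have "count_list (take (Suc p) (rcw lam mu T)) k = card ({c. T c = k} \<inter> set ?cells)"
    using distinct_length_filter[of ?cells] distinct_rcw_cells[THEN distinct_take]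
    by (simp add: rcw_def take_map count_list_eq_length_filter filter_map comp_def eq_commute)
  ultimately show ?thesis by (simp only:) (rule arg_cong[where f = card], blast)
qed

section \<open>Occurrence numbers in an LRS tableau\<close>

locale lrs_tableau =
  fixes n :: nat and lam mu :: "nat list" and T :: "nat \<times> nat \<Rightarrow> nat"
  assumes partition_lam: "is_partition lam" and partition_mu: "is_partition mu"
    and length_mu: "length mu \<le> n" and LRS: "LRS n lam mu T"
begin

lemma entry_range: "c \<in> skew lam mu \<Longrightarrow> 1 \<le> T c \<and> T c \<le> 2 * n"
  using LRS by (simp add: LRS_def semistandard_def)

lemma entry_row_mono:
  assumes "(a, b) \<in> skew lam mu" "(a, b') \<in> skew lam mu" "b \<le> b'"
  shows "T (a, b) \<le> T (a, b')"
  using assms(3,2)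
proof (induction b' rule: dec_induct)
  case (step m)
  then have m: "(a, m) \<in> skew lam mu" using assms(1) by (auto simp: mem_skew_iff)
  then have "T (a, m) \<le> T (a, m + 1)"
    using step.prems LRS unfolding LRS_def semistandard_def by simp
  then show ?case using step.IH[OF m] by simp
qed simp

lemma entry_col_strict:
  assumes "(a, b) \<in> skew lam mu" "(a', b) \<in> skew lam mu" "a < a'"
  shows "T (a, b) < T (a', b)"
  using Suc_leI[OF assms(3)] assms(2)
proof (induction a' rule: dec_induct)
  case base
  then show ?case using assms(1) LRS unfolding LRS_def semistandard_def by simp
next
  case (step m)
  have "ppart lam (Suc m) \<le> ppart lam m" "ppart mu m \<le> ppart mu a"
    using step.hyps(1) assms(1) ppart_antimono[OF partition_lam, of m "Suc m"]
      ppart_antimono[OF partition_mu, of a m] by (auto simp: mem_skew_iff)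
  then have m: "(m, b) \<in> skew lam mu" using step.prems assms(1) step.hyps(1) by (auto simp: mem_skew_iff)
  then have "T (m, b) < T (m + 1, b)"
    using step.prems LRS unfolding LRS_def semistandard_def by simp
  then show ?case using step.IH[OF m] by simp
qed

definition count_upto :: "nat \<times> nat \<Rightarrow> nat \<Rightarrow> nat" where
  "count_upto c k = card {x \<in> skew lam mu. read_le x c \<and> T x = k}"

definition occurrence :: "nat \<times> nat \<Rightarrow> nat" where
  "occurrence c = count_upto c (T c)"

lemma obtain_rcw_index:
  assumes "c \<in> skew lam mu"
  obtains p where "p < length (rcw_cells lam mu)" "rcw_cells lam mu ! p = c"
  using assms set_rcw_cells[OF partition_lam] by (metis in_set_conv_nth)

lemma count_upto_letter_antimono:
  assumes c: "c \<in> skew lam mu" and "1 \<le> j" "j \<le> j'" "j' \<le> 2 * n"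
  shows "count_upto c j' \<le> count_upto c j"
  using assms(3,4)
proof (induction j' rule: dec_induct)
  case (step m)
  obtain p where p: "p < length (rcw_cells lam mu)" "rcw_cells lam mu ! p = c"
    using obtain_rcw_index[OF c] .
  have "yamanouchi (2 * n) (rcw lam mu T)" using LRS by (simp add: LRS_def)
  moreover have "Suc p \<le> length (rcw lam mu T)" using p by (simp add: rcw_def)
  ultimately have "count_upto c (m + 1) \<le> count_upto c m"
    using step assms(2) count_list_take_rcw[OF partition_lam p(1)]
    unfolding yamanouchi_def count_upto_def p(2) by auto
  then show ?case using step by simp
qed simp

lemma weight_antimono:
  assumes "1 \<le> j" "j \<le> j'"
  shows "weight lam mu T j' \<le> weight lam mu T j"
proof (cases "j' \<le> 2 * n")
  case True
  from assms(2) True show ?thesis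
  proof (induction j' rule: dec_induct)
    case (step m)
    then have "1 \<le> m \<and> m < 2 * n" using assms(1) by linarith
    then have "weight lam mu T (m + 1) \<le> weight lam mu T m" using LRS by (simp add: LRS_def)
    then show ?case using step by simp
  qed simp
next
  case False
  then have "{c \<in> skew lam mu. T c = j'} = {}" using entry_range by fastforce
  then have "weight lam mu T j' = 0" unfolding weight_def by (metis card.empty)
  then show ?thesis by simp
qed

lemma count_upto_read_le_mono: "read_le c c' \<Longrightarrow> count_upto c k \<le> count_upto c' k"
  unfolding count_upto_def using finite_skew by (intro card_mono) (auto intro: read_le_trans)

lemma count_upto_read_before_less:
  assumes "read_before c c'" "c' \<in> skew lam mu"
  shows "count_upto c (T c') < count_upto c' (T c')"
  unfolding count_upto_def
proof (intro psubset_card_mono psubsetI)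
  show "{x \<in> skew lam mu. read_le x c \<and> T x = T c'}
      \<subseteq> {x \<in> skew lam mu. read_le x c' \<and> T x = T c'}"
    using assms(1) by (auto simp: read_le_def dest: read_before_trans)
  have "\<not> read_le c' c" using assms(1) by (simp add: not_read_le_iff)
  then show "{x \<in> skew lam mu. read_le x c \<and> T x = T c'}
      \<noteq> {x \<in> skew lam mu. read_le x c' \<and> T x = T c'}"
    using assms(2) by (auto simp: read_le_def)
qed (simp add: finite_skew)

lemma occurrence_pos:
  assumes "c \<in> skew lam mu"
  shows "1 \<le> occurrence c"
proof -
  have "c \<in> {x \<in> skew lam mu. read_le x c \<and> T x = T c}" using assms by (simp add: read_le_def)
  then have "{x \<in> skew lam mu. read_le x c \<and> T x = T c} \<noteq> {}" by blast
  then show ?thesis unfolding occurrence_def count_upto_def by (simp add: Suc_le_eq card_gt_0_iff finite_skew)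
qed

lemma occurrence_le_weight: "occurrence c \<le> weight lam mu T (T c)"
  unfolding occurrence_def count_upto_def weight_def using finite_skew by (intro card_mono) auto

lemma occurrence_strict_mono:
  "c' \<in> skew lam mu \<Longrightarrow> T c = T c' \<Longrightarrow> read_before c c' \<Longrightarrow> occurrence c < occurrence c'"
  using count_upto_read_before_less by (simp add: occurrence_def)

lemma occurrence_inj:
  assumes "c \<in> skew lam mu" "c' \<in> skew lam mu" "T c = T c'" "occurrence c = occurrence c'"
  shows "c = c'"
proof (rule ccontr)
  assume "c \<noteq> c'"
  then consider "read_before c c'" | "read_before c' c" using read_before_total by blast
  then show False
    using occurrence_strict_mono[of c' c] occurrence_strict_mono[of c c'] assms by cases auto
qed

lemma occurrence_image: "occurrence ` {c \<in> skew lam mu. T c = j} = {1..weight lam mu T j}"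
proof (rule card_subset_eq)
  have "inj_on occurrence {c \<in> skew lam mu. T c = j}"
    using occurrence_inj by (auto intro: inj_onI)
  then show "card (occurrence ` {c \<in> skew lam mu. T c = j}) = card {1..weight lam mu T j}"
    by (simp add: card_image weight_def)
  show "occurrence ` {c \<in> skew lam mu. T c = j} \<subseteq> {1..weight lam mu T j}"
    using occurrence_pos occurrence_le_weight by fastforce
qed simp

lemma obtain_occurrence:
  assumes "1 \<le> k" "k \<le> weight lam mu T j"
  obtains c where "c \<in> skew lam mu" "T c = j" "occurrence c = k"
proof -
  have "k \<in> occurrence ` {c \<in> skew lam mu. T c = j}" using assms occurrence_image by simp
  then show ?thesis using that by blast
qed

lemma occurrence_row_strict_antimono:
  assumes "(a, b) \<in> skew lam mu" "(a, b') \<in> skew lam mu" "b < b'"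
  shows "occurrence (a, b') < occurrence (a, b)"
proof -
  have "occurrence (a, b') \<le> count_upto (a, b') (T (a, b))"
    unfolding occurrence_def using assms entry_range entry_row_mono
    by (intro count_upto_letter_antimono) auto
  also have "\<dots> < occurrence (a, b)"
    unfolding occurrence_def using assms by (intro count_upto_read_before_less) (auto simp: read_before_def)
  finally show ?thesis .
qed

lemma occurrence_col_antimono:
  assumes "(a, b) \<in> skew lam mu" "(a', b) \<in> skew lam mu" "a < a'"
  shows "occurrence (a', b) \<le> occurrence (a, b)"
proof -
  have "occurrence (a', b) \<le> count_upto (a', b) (T (a, b))"
    unfolding occurrence_def using assms entry_range entry_col_strict[OF assms]
    by (intro count_upto_letter_antimono) auto
  also have "\<dots> \<le> occurrence (a, b)"
    unfolding occurrence_def count_upto_def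
  proof (intro card_mono)
    show "{x \<in> skew lam mu. read_le x (a', b) \<and> T x = T (a, b)}
        \<subseteq> {x \<in> skew lam mu. read_le x (a, b) \<and> T x = T (a, b)}"
    proof clarify
      fix u v assume uv: "(u, v) \<in> skew lam mu" "read_le (u, v) (a', b)" "T (u, v) = T (a, b)"
      show "read_le (u, v) (a, b)"
      proof (rule ccontr)
        assume "\<not> read_le (u, v) (a, b)"
        then have "v = b" "a < u" using uv(2) by (auto simp: not_read_le_iff read_le_def read_before_def)
        then show False using entry_col_strict[OF assms(1), of u] uv(1,3) by simp
      qed
    qed
  qed (simp add: finite_skew)
  finally show ?thesis .
qed

lemma occurrence_less_imp_row_le:
  assumes c: "c \<in> skew lam mu" and c': "c' \<in> skew lam mu" and "T c = T c'"
    and less: "occurrence c < occurrence c'"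
  shows "fst c \<le> fst c'"
proof (rule ccontr)
  assume above: "\<not> fst c \<le> fst c'"
  obtain a b a' b' where cc: "c = (a, b)" "c' = (a', b')" by fastforce
  have "read_before c c'"
    using less count_upto_read_le_mono[of c' c "T c"] \<open>T c = T c'\<close> not_read_le_iff[of c' c]
    by (auto simp: occurrence_def)
  then have "b' < b" using above cc by (auto simp: read_before_def)
  have between: "(a', b) \<in> skew lam mu"
    using c c' cc above \<open>b' < b\<close> ppart_antimono[OF partition_lam, of a' a] by (auto simp: mem_skew_iff)
  have "T (a', b') \<le> T (a', b)" using entry_row_mono[OF _ between] c' cc \<open>b' < b\<close> by simp
  also have "\<dots> < T (a, b)" using entry_col_strict[OF between] c cc above by simp
  finally show False using \<open>T c = T c'\<close> cc by simp
qed

lemma lozenge_eq_occurrence: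
  assumes "c \<in> skew lam mu"
  shows "lozenge lam mu T c = occurrence c"
proof -
  obtain p where p: "p < length (rcw_cells lam mu)" "rcw_cells lam mu ! p = c"
    using obtain_rcw_index[OF assms] .
  have letter: "rcw lam mu T ! p = T c" using p by (simp add: rcw_def)
  have "c \<in> J_set lam mu T k \<longleftrightarrow> k = occurrence c" for k
  proof
    assume "c \<in> J_set lam mu T k"
    then obtain q where q: "c = rcw_cells lam mu ! q" "q < length (rcw_cells lam mu)"
      "count_list (take (Suc q) (rcw lam mu T)) (rcw lam mu T ! q) = k"
      unfolding J_set_def by blast
    have "q = p" using q p distinct_rcw_cells nth_eq_iff_index_eq by metis
    then show "k = occurrence c"
      using q letter count_list_take_rcw[OF partition_lam p(1)] p(2)
      by (simp add: occurrence_def count_upto_def)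
  next
    assume "k = occurrence c"
    then show "c \<in> J_set lam mu T k"
      unfolding J_set_def using p letter count_list_take_rcw[OF partition_lam p(1)] occurrence_le_weight[of c]
      by (auto simp: occurrence_def count_upto_def)
  qed
  moreover have "occurrence c \<le> weight lam mu T 1"
    using occurrence_le_weight[of c] weight_antimono[of 1 "T c"] entry_range[OF assms] by simp
  ultimately have "(THE k. 1 \<le> k \<and> k \<le> weight lam mu T 1 \<and> c \<in> J_set lam mu T k) = occurrence c"
    using occurrence_pos[OF assms] by (intro the_equality) auto
  then show ?thesis using assms by (simp add: lozenge_def)
qed

end

section \<open>The chain of partitions and its strips\<close>

lemma le_r_sorted_list_of_set:
  fixes A B :: "nat set"
  assumes fin: "finite A" "finite B" and prefix: "\<And>x. card (B \<inter> {..x}) \<le> card (A \<inter> {..x})"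
  shows "le_r (sorted_list_of_set A) (sorted_list_of_set B)"
  unfolding le_r_def
proof (intro conjI allI impI)
  let ?xs = "sorted_list_of_set A" and ?ys = "sorted_list_of_set B"
  obtain x where "A \<union> B \<subseteq> {..x}" using fin by (metis finite_Un finite_nat_iff_bounded_le)
  then have "A \<inter> {..x} = A" "B \<inter> {..x} = B" by auto
  then show "length ?ys \<le> length ?xs" using prefix[of x] by simp
  have set_xs: "set ?xs = A" and set_ys: "set ?ys = B" using fin by simp_all
  fix j assume j: "j < length ?ys"
  let ?y = "?ys ! j"
  have "nth ?ys ` {0..j} \<subseteq> B \<inter> {..?y}"
    using j nth_mem[of _ ?ys] sorted_nth_mono[OF sorted_sorted_list_of_set, of _ j B]
    by (auto simp: set_ys)
  moreover have "inj_on (nth ?ys) {0..j}"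
    using j distinct_sorted_list_of_set[of B] by (auto simp: inj_on_def nth_eq_iff_index_eq)
  ultimately have "Suc j \<le> card (B \<inter> {..?y})"
    using fin(2) card_inj_on_le[of "nth ?ys" "{0..j}" "B \<inter> {..?y}"] by simp
  then have many: "Suc j \<le> card (A \<inter> {..?y})" using prefix[of ?y] by simp
  show "?xs ! j \<le> ?y"
  proof (rule ccontr)
    assume big: "\<not> ?xs ! j \<le> ?y"
    have "A \<inter> {..?y} \<subseteq> nth ?xs ` {0..<j}"
    proof
      fix a assume a: "a \<in> A \<inter> {..?y}"
      then obtain k where k: "k < length ?xs" "a = ?xs ! k"
        using set_xs by (metis IntD1 in_set_conv_nth)
      have "k < j"
      proof (rule ccontr)
        assume "\<not> k < j"
        then have "?xs ! j \<le> ?xs ! k" using k(1) by (simp add: sorted_nth_mono)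
        then show False using a k big by auto
      qed
      then show "a \<in> nth ?xs ` {0..<j}" using k by auto
    qed
    then have "card (A \<inter> {..?y}) \<le> card (nth ?xs ` {0..<j})" by (intro card_mono) auto
    also have "\<dots> \<le> j" using card_image_le[of "{0..<j}" "nth ?xs"] by simp
    finally show False using many by simp
  qed
qed

context lrs_tableau
begin

abbreviation recording :: "nat \<times> nat \<Rightarrow> nat" where
  "recording \<equiv> lozenge lam mu T"

abbreviation chain_length :: "nat \<Rightarrow> nat" where
  "chain_length k \<equiv> length (mu_chain lam mu recording k)"

abbreviation slack :: "nat \<Rightarrow> nat" where
  "slack i \<equiv> slack_t0 lam mu recording i"

definition chain_cells :: "nat \<Rightarrow> (nat \<times> nat) set" where
  "chain_cells k = diagram mu \<union> {c \<in> skew lam mu. k < occurrence c}"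

definition strip :: "nat \<Rightarrow> (nat \<times> nat) set" where
  "strip i = {c \<in> skew lam mu. occurrence c = i}"

lemma chain_cells_left_closed:
  assumes ab: "(a, b) \<in> chain_cells k" and b: "1 < b"
  shows "(a, b - 1) \<in> chain_cells k"
proof (cases "(a, b - 1) \<in> diagram mu")
  case False
  then have "(a, b) \<notin> diagram mu" using b by (auto simp: mem_diagram_iff)
  then have cell: "(a, b) \<in> skew lam mu" "k < occurrence (a, b)" using ab by (auto simp: chain_cells_def)
  then have left: "(a, b - 1) \<in> skew lam mu" using False b by (auto simp: mem_skew_iff mem_diagram_iff)
  show ?thesis using occurrence_row_strict_antimono[OF left, of b] cell b left by (simp add: chain_cells_def)
qed (simp add: chain_cells_def)

lemma chain_cells_up_closed:
  assumes ab: "(a, b) \<in> chain_cells k" and a: "1 < a"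
  shows "(a - 1, b) \<in> chain_cells k"
proof (cases "(a - 1, b) \<in> diagram mu")
  case False
  have mu: "ppart mu a \<le> ppart mu (a - 1)" and lam: "ppart lam a \<le> ppart lam (a - 1)"
    using ppart_antimono[OF partition_mu, of "a - 1" a] ppart_antimono[OF partition_lam, of "a - 1" a] a
    by simp_all
  have "(a, b) \<notin> diagram mu" using False a mu by (auto simp: mem_diagram_iff)
  then have cell: "(a, b) \<in> skew lam mu" "k < occurrence (a, b)" using ab by (auto simp: chain_cells_def)
  then have up: "(a - 1, b) \<in> skew lam mu" using False a lam by (auto simp: mem_skew_iff mem_diagram_iff)
  show ?thesis using occurrence_col_antimono[OF up cell(1)] cell(2) a up by (simp add: chain_cells_def)
qed (simp add: chain_cells_def)

lemma mu_chain_partition_diagram: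
  shows "is_partition (mu_chain lam mu recording k)" and "diagram (mu_chain lam mu recording k) = chain_cells k"
proof -
  have finite: "finite (chain_cells k)"
    by (simp add: chain_cells_def finite_diagram finite_skew)
  have pos: "1 \<le> a \<and> 1 \<le> b" if "(a, b) \<in> chain_cells k" for a b
    using that by (auto simp: chain_cells_def mem_diagram_iff mem_skew_iff)
  obtain g where g: "is_partition g" "diagram g = chain_cells k"
    using obtain_partition_with_diagram[OF finite pos chain_cells_left_closed chain_cells_up_closed] .
  have "chain_cells k = diagram mu \<union> {c \<in> skew lam mu. k + 1 \<le> recording c}"
    by (auto simp: chain_cells_def lozenge_eq_occurrence)
  then have "mu_chain lam mu recording k = g"
    unfolding mu_chain_def using g partition_eqI by (intro the_equality) auto
  with g show "is_partition (mu_chain lam mu recording k)"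
    and "diagram (mu_chain lam mu recording k) = chain_cells k" by simp_all
qed

lemma mem_chain_cells_imp_row_le: "(a, b) \<in> chain_cells k \<Longrightarrow> 1 \<le> a \<and> a \<le> chain_length k"
  using mu_chain_partition_diagram[of k] mem_diagram_imp_row_le[of a b "mu_chain lam mu recording k"]
    mem_diagram_iff[of a b "mu_chain lam mu recording k"] by auto

lemma first_column_mem_chain_cells_iff: "(a, 1) \<in> chain_cells k \<longleftrightarrow> 1 \<le> a \<and> a \<le> chain_length k"
  using mu_chain_partition_diagram[of k] first_column_mem_diagram_iff[of "mu_chain lam mu recording k" a] by auto

lemma chain_length_Suc_le: "chain_length (Suc k) \<le> chain_length k"
proof (cases "chain_length (Suc k) = 0")
  case False
  then have "(chain_length (Suc k), 1) \<in> chain_cells (Suc k)"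
    using first_column_mem_chain_cells_iff[of "chain_length (Suc k)" "Suc k"] by (simp add: Suc_le_eq)
  then have "(chain_length (Suc k), 1) \<in> chain_cells k" by (auto simp: chain_cells_def)
  then show ?thesis using first_column_mem_chain_cells_iff[of "chain_length (Suc k)" k] by simp
qed simp

lemma chain_cells_diff: "chain_cells k - chain_cells (Suc k) = strip (Suc k)"
  by (auto simp: chain_cells_def strip_def skew_def)

lemma chain_strip_eq: "chain_strip lam mu recording (Suc k) = strip (Suc k)"
  using mu_chain_partition_diagram chain_cells_diff by (simp add: chain_strip_def)

lemma Qcount_eq_card_strip: "Qcount lam mu recording i = card (strip i)"
  unfolding Qcount_def strip_def by (rule arg_cong[where f = card]) (auto simp: lozenge_eq_occurrence)

lemma finite_strip: "finite (strip i)"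
  by (simp add: strip_def finite_skew)

lemma inj_on_fst_strip: "inj_on fst (strip i)"
proof (rule inj_onI)
  fix c c' assume c: "c \<in> strip i" "c' \<in> strip i" "fst c = fst c'"
  then obtain a b b' where cc: "c = (a, b)" "c' = (a, b')" by (metis prod.collapse)
  have "\<not> b < b'" "\<not> b' < b"
    using occurrence_row_strict_antimono[of a b b'] occurrence_row_strict_antimono[of a b' b] c cc
    by (auto simp: strip_def)
  then show "c = c'" using cc by simp
qed

lemma strip_Suc_subset: "strip (Suc k) \<subseteq> chain_cells k"
  using chain_cells_diff by blast

definition slack_rows :: "nat \<Rightarrow> nat set" where
  "slack_rows i = {r. 1 \<le> r \<and> r \<le> chain_length i \<and> (\<forall>b. (r, b) \<notin> strip i)}"

lemma finite_slack_rows: "finite (slack_rows i)"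
  by (rule finite_subset[of _ "{1..chain_length i}"]) (auto simp: slack_rows_def)

lemma fst_strip_pos: "c \<in> strip i \<Longrightarrow> 1 \<le> fst c"
  by (cases c) (simp add: strip_def mem_skew_iff)

lemma card_strip_rows_le: "card {c \<in> strip i. fst c \<le> x} \<le> x"
proof -
  have "card {c \<in> strip i. fst c \<le> x} = card (fst ` {c \<in> strip i. fst c \<le> x})"
    by (intro card_image[symmetric] inj_on_subset[OF inj_on_fst_strip]) blast
  also have "\<dots> \<le> card {1..x}" using fst_strip_pos by (intro card_mono) auto
  finally show ?thesis by simp
qed

lemma card_slack_rows_upto:
  assumes "x \<le> chain_length i"
  shows "card (slack_rows i \<inter> {..x}) = x - card {c \<in> strip i. fst c \<le> x}"
proof -
  let ?rows = "fst ` {c \<in> strip i. fst c \<le> x}"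
  have "slack_rows i \<inter> {..x} = {1..x} - ?rows"
    using assms by (auto simp: slack_rows_def image_iff)
  moreover have "?rows \<subseteq> {1..x}" using fst_strip_pos by auto
  moreover have "card ?rows = card {c \<in> strip i. fst c \<le> x}"
    by (intro card_image inj_on_subset[OF inj_on_fst_strip]) blast
  ultimately show ?thesis by (simp add: card_Diff_subset finite_subset)
qed

lemma slack_Suc_eq:
  "slack (Suc k) = chain_length (Suc k) - card {c \<in> strip (Suc k). fst c \<le> chain_length (Suc k)}"
proof -
  have "{c \<in> strip (Suc k). 1 \<le> fst c \<and> fst c \<le> chain_length (Suc k)}
      = {c \<in> strip (Suc k). fst c \<le> chain_length (Suc k)}"
    using fst_strip_pos by blast
  then show ?thesis by (simp add: slack_t0_def slack_l0_def chain_strip_eq)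
qed

lemma slack_le_chain_length: "slack i \<le> chain_length i"
  by (simp add: slack_t0_def)

lemma slack_eq_card_slack_rows: "slack (Suc k) = card (slack_rows (Suc k))"
proof -
  have "slack_rows (Suc k) \<inter> {..chain_length (Suc k)} = slack_rows (Suc k)"
    by (auto simp: slack_rows_def)
  then show ?thesis using card_slack_rows_upto[of "chain_length (Suc k)" "Suc k"] slack_Suc_eq by simp
qed

lemma slack_vec_Suc_eq: "slack_vec lam mu recording (Suc k) = sorted_list_of_set (slack_rows (Suc k))"
  by (simp add: slack_vec_def slack_rows_def chain_strip_eq)

lemma set_slack_vec_subset: "set (slack_vec lam mu recording i) \<subseteq> {1..chain_length i}"
proof (cases i)
  case (Suc k)
  then show ?thesis using finite_slack_rows by (auto simp: slack_vec_Suc_eq slack_rows_def)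
qed (simp add: slack_vec_def)

lemma chain_length_eq_card_strip_add_slack: "chain_length k = card (strip (Suc k)) + slack (Suc k)"
proof -
  let ?L = "chain_length (Suc k)"
  let ?low = "{c \<in> strip (Suc k). fst c \<le> ?L}" and ?high = "{c \<in> strip (Suc k). \<not> fst c \<le> ?L}"
  have rows_high: "fst ` ?high = {?L<..chain_length k}"
  proof (intro set_eqI iffI)
    fix r assume "r \<in> fst ` ?high"
    then show "r \<in> {?L<..chain_length k}"
      using strip_Suc_subset mem_chain_cells_imp_row_le by fastforce
  next
    fix r assume r: "r \<in> {?L<..chain_length k}"
    then have "(r, 1) \<in> chain_cells k - chain_cells (Suc k)"
      using first_column_mem_chain_cells_iff[of r] by auto
    then show "r \<in> fst ` ?high" using r chain_cells_diff by force
  qed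
  have "card ?high = card (fst ` ?high)"
    by (intro card_image[symmetric] inj_on_subset[OF inj_on_fst_strip]) blast
  then have "card ?high = chain_length k - ?L" using rows_high by simp
  moreover have "card (strip (Suc k)) = card ?low + card ?high"
    using card_Int_Diff[OF finite_strip, of "Suc k" "{c. fst c \<le> ?L}"] by (simp add: Int_def set_diff_eq)
  ultimately show ?thesis
    using slack_Suc_eq card_strip_rows_le[of "Suc k" ?L] chain_length_Suc_le[of k] by simp
qed

lemma card_strip_rows_antimono:
  "card {c \<in> strip (Suc (Suc k)). fst c \<le> x} \<le> card {c \<in> strip (Suc k). fst c \<le> x}"
proof -
  let ?F = "{c \<in> strip (Suc (Suc k)). fst c \<le> x}" and ?G = "{c \<in> strip (Suc k). fst c \<le> x}"
  have "T ` ?F \<subseteq> T ` ?G"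
  proof
    fix j assume "j \<in> T ` ?F"
    then obtain c where c: "c \<in> skew lam mu" "occurrence c = Suc (Suc k)" "fst c \<le> x" "T c = j"
      by (auto simp: strip_def)
    then have "Suc k \<le> weight lam mu T j" using occurrence_le_weight[of c] by simp
    then obtain c' where c': "c' \<in> skew lam mu" "T c' = j" "occurrence c' = Suc k"
      using obtain_occurrence[of "Suc k" j] by auto
    then have "fst c' \<le> fst c" using occurrence_less_imp_row_le[OF c'(1) c(1)] c by simp
    then have "c' \<in> ?G" using c c' by (simp add: strip_def)
    then show "j \<in> T ` ?G" using c'(2)[symmetric] by (rule rev_image_eqI)
  qed
  have "inj_on T ?F" using occurrence_inj by (auto simp: strip_def intro: inj_onI)
  then have "card ?F = card (T ` ?F)" by (simp add: card_image)
  also have "\<dots> \<le> card (T ` ?G)" using \<open>T ` ?F \<subseteq> T ` ?G\<close> finite_strip by (intro card_mono) auto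
  also have "\<dots> \<le> card ?G" using finite_strip by (intro card_image_le) auto
  finally show ?thesis .
qed

lemma slack_mono: "slack k \<le> slack (Suc k)"
proof (cases k)
  case (Suc k')
  let ?L = "chain_length (Suc k')"
  have "{c \<in> strip (Suc (Suc k')). fst c \<le> ?L} = strip (Suc (Suc k'))"
    using strip_Suc_subset mem_chain_cells_imp_row_le by fastforce
  then have "card (strip (Suc (Suc k'))) \<le> card {c \<in> strip (Suc k'). fst c \<le> ?L}"
    using card_strip_rows_antimono[of k' ?L] by simp
  then show ?thesis
    using Suc slack_Suc_eq[of k'] chain_length_eq_card_strip_add_slack[of "Suc k'"] by simp
qed (simp add: slack_t0_def)

lemma excess_le_card_strip:
  assumes long: "n < chain_length k"
  shows "2 * (chain_length k - n) \<le> card (strip (Suc k))"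
proof -
  let ?r = "chain_length k"
  have "(?r, 1) \<in> chain_cells k" using long first_column_mem_chain_cells_iff[of ?r k] by simp
  moreover have "(?r, 1) \<notin> diagram mu" using mem_diagram_imp_row_le[of ?r 1 mu] length_mu long by auto
  ultimately have corner: "(?r, 1) \<in> skew lam mu" "k < occurrence (?r, 1)" by (auto simp: chain_cells_def)
  have "enat (2 * (?r - n)) \<le> ext_val lam mu T (n + (?r - n), 1)"
    using LRS unfolding LRS_def by blast
  then have letter: "2 * (?r - n) \<le> T (?r, 1)"
    using long corner(1) by (simp add: ext_val_def skew_def)
  have "{1..T (?r, 1)} \<subseteq> T ` strip (Suc k)"
  proof
    fix j assume j: "j \<in> {1..T (?r, 1)}"
    have "Suc k \<le> weight lam mu T (T (?r, 1))" using corner(2) occurrence_le_weight[of "(?r, 1)"] by simp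
    also have "\<dots> \<le> weight lam mu T j" using j by (intro weight_antimono) auto
    finally obtain c where "c \<in> skew lam mu" "T c = j" "occurrence c = Suc k"
      using obtain_occurrence[of "Suc k" j] by auto
    then show "j \<in> T ` strip (Suc k)" by (force simp: strip_def)
  qed
  then have "card {1..T (?r, 1)} \<le> card (T ` strip (Suc k))" using finite_strip by (intro card_mono) auto
  also have "\<dots> \<le> card (strip (Suc k))" using finite_strip by (rule card_image_le)
  finally show ?thesis using letter by simp
qed

lemma chain_length_add_slack_le: "chain_length k + slack (Suc k) \<le> 2 * n"
proof (cases "n < chain_length k")
  case True
  then show ?thesis
    using excess_le_card_strip[of k] chain_length_eq_card_strip_add_slack[of k] by simp
next
  case False
  then show ?thesis using slack_le_chain_length[of "Suc k"] chain_length_Suc_le[of k] by simp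
qed

lemma slack_vec_le_r: "le_r (slack_vec lam mu recording (Suc k)) (slack_vec lam mu recording k)"
proof (cases k)
  case 0
  then show ?thesis by (simp add: slack_vec_def le_r_def)
next
  case (Suc k')
  have "card (slack_rows (Suc k') \<inter> {..x}) \<le> card (slack_rows (Suc (Suc k')) \<inter> {..x})" for x
  proof (cases "x \<le> chain_length (Suc (Suc k'))")
    case True
    moreover have "x \<le> chain_length (Suc k')" using True chain_length_Suc_le[of "Suc k'"] by simp
    ultimately show ?thesis
      using card_slack_rows_upto card_strip_rows_antimono[of k' x] by simp
  next
    case False
    then have "slack_rows (Suc (Suc k')) \<inter> {..x} = slack_rows (Suc (Suc k'))"
      by (auto simp: slack_rows_def)
    moreover have "card (slack_rows (Suc k') \<inter> {..x}) \<le> card (slack_rows (Suc k'))"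
      using finite_slack_rows by (intro card_mono) auto
    ultimately show ?thesis
      using slack_mono[of "Suc k'"] slack_eq_card_slack_rows by simp
  qed
  then show ?thesis
    unfolding Suc slack_vec_Suc_eq by (intro le_r_sorted_list_of_set finite_slack_rows)
qed

end

theorem proposition3:
  fixes n :: nat and lam mu :: "nat list" and Q :: "nat \<times> nat \<Rightarrow> nat" and i :: nat
  assumes "is_partition lam" and "length lam \<le> 2 * n"
    and "is_partition mu" and "length mu \<le> n"
    and "diagram mu \<subseteq> diagram lam"
    and "Q \<in> Rec n lam mu"
    and "1 \<le> i" and "i \<le> Nmax lam mu Q"
  shows
    "(length (mu_chain lam mu Q (i - 1)) = Qcount lam mu Q i + slack_t0 lam mu Q i \<and>
      Qcount lam mu Q i + slack_t0 lam mu Q i \<ge> length (mu_chain lam mu Q i)) \<and>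
     (slack_t0 lam mu Q (i - 1) \<le> slack_t0 lam mu Q i \<and>
      slack_t0 lam mu Q i \<le> length (mu_chain lam mu Q i) \<and>
      length (mu_chain lam mu Q i) \<le> length (mu_chain lam mu Q (i - 1))) \<and>
     (2 * n \<ge> Qcount lam mu Q i + 2 * slack_t0 lam mu Q i \<and>
      Qcount lam mu Q i + 2 * slack_t0 lam mu Q i
        = length (mu_chain lam mu Q (i - 1)) + slack_t0 lam mu Q i \<and>
      2 * n - slack_t0 lam mu Q i \<ge> Qcount lam mu Q i + slack_t0 lam mu Q i \<and>
      Qcount lam mu Q i + slack_t0 lam mu Q i = length (mu_chain lam mu Q (i - 1))) \<and>
     le_r (slack_vec lam mu Q i) (slack_vec lam mu Q (i - 1)) \<and>
     (set (slack_vec lam mu Q i) \<subseteq> {1..length (mu_chain lam mu Q i)} \<and>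
      {1..length (mu_chain lam mu Q i)} \<subseteq> {1..length (mu_chain lam mu Q (i - 1))} \<and>
      {1..length (mu_chain lam mu Q (i - 1))} \<subseteq> {1..2 * n - slack_t0 lam mu Q i})"
proof -
  obtain T where "LRS n lam mu T" and Q: "Q = lozenge lam mu T"
    using assms(6) by (auto simp: Rec_def)
  then interpret lrs_tableau n lam mu T
    using assms(1,3,4) by unfold_locales
  obtain k where i: "i = Suc k" using assms(7) by (cases i) auto
  have "chain_length k = Qcount lam mu Q i + slack i"
    using chain_length_eq_card_strip_add_slack[of k] by (simp add: Q i Qcount_eq_card_strip)
  moreover have "chain_length i \<le> chain_length k" using chain_length_Suc_le by (simp add: Q i)
  moreover have "slack k \<le> slack i" using slack_mono by (simp add: i)
  moreover have "slack i \<le> chain_length i" by (rule slack_le_chain_length)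
  moreover have "chain_length k + slack i \<le> 2 * n" using chain_length_add_slack_le by (simp add: i)
  moreover have "le_r (slack_vec lam mu Q i) (slack_vec lam mu Q k)"
    using slack_vec_le_r by (simp add: Q i)
  moreover have "set (slack_vec lam mu Q i) \<subseteq> {1..chain_length i}"
    using set_slack_vec_subset by (simp add: Q)
  ultimately show ?thesis unfolding Q i by auto
qed

end
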